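(* Let $p\geq1$, $\mu>0$, and let $g:\mathbb{R}^n\to\mathbb{R}\cup\{+\infty\}$ be convex. Let $\lambda^{\ast}$ be the optimal solution of $$\min_{\lambda\in\mathbb{R}^n}\Big\{g(\lambda)+\frac{\mu}{1+\frac1p}\lVert\lambda\rVert^{1+\frac1p}\Big\},$$ and suppose $\lambda^{\ast}\neq0$. Let $\lambda^k\in\mathbb{R}^n$ with $\lVert\lambda^k\rVert>0$, set $t^k=\lVert\lambda^k\rVert^{\frac1p-1}$, and let $\lambda^{k+1}=\arg\min_{\lambda\in\mathbb{R}^n}\{g(\lambda)+\frac{\mu}{2}t^k\lVert\lambda\rVert^2\}$. Then $$\big(\lVert\lambda^k\rVert^{1-\frac1p}-\lVert\lambda^{\ast}\rVert^{1-\frac1p}\big)\big(\lVert\lambda^{k+1}\rVert^2-\lVert\lambda^{\ast}\rVert^2\big)\geq0,$$ and $$\big(\lVert\lambda^k\rVert^{1-\frac1p}-\lVert\lambda^{\ast}\rVert^{1-\frac1p}\big)\big(\lVert\lambda^k\rVert^{1-\frac1p}-\lVert\lambda^{k+1}\rVert^{1-\frac1p}\big)\geq0.$$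
   Context: $\lVert\cdot\rVert$ is the Euclidean norm. The minimizers above are assumed to exist. This is one step of the fixed point iteration: given $\lambda^k$, set $t^k=\lVert\lambda^k\rVert^{1/p-1}$ if $\lambda^k\neq0$ and $t^k=0$ otherwise, and $\lambda^{k+1}=\arg\min_\lambda\{g(\lambda)+\frac{\mu}{2}t^k\lVert\lambda\rVert^2\}$. *)

theory Defs
  imports "HOL-Analysis.Analysis"
begin

end

theory Submission
  imports Defs
begin

text \<open>
  Write q = 1/p, x = lambda*, y = lambda^(k+1) and a = |lambda^k|. Both x and y minimise g
  plus a differentiable function of the norm over the convex domain, so testing each
  first-order optimality condition against the other minimiser and adding cancels g:
  |x|^(q-1) (x.y - |x|^2) + a^(q-1) (x.y - |y|^2) >= 0.
  By Cauchy-Schwarz this puts |y| between |x| and the weighted geometric mean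
  a^(1-q) |x|^q, hence between |x| and a, and both claims are then monotonicity of
  t^(1-q) and t^2 on that interval.
\<close>

lemma convex_on_minimizer_variational_ineq:
  fixes g \<phi> :: "'a::real_vector \<Rightarrow> real"
  assumes D: "convex D" and g: "convex_on D g" and x: "x \<in> D" and y: "y \<in> D"
    and min: "\<forall>z\<in>D. g x + \<phi> x \<le> g z + \<phi> z"
    and deriv: "((\<lambda>t. \<phi> (x + t *\<^sub>R (y - x))) has_real_derivative L) (at_right 0)"
  shows "g x - g y \<le> L"
proof -
  let ?f = "\<lambda>t. \<phi> (x + t *\<^sub>R (y - x))"
  have "eventually (\<lambda>t. g x - g y \<le> (?f t - ?f 0) / (t - 0)) (at_right 0)"
    using eventually_at_right_real[OF zero_less_one]
  proof eventually_elim
    case (elim t)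
    then have t: "0 < t" "t < 1" by auto
    have seg: "x + t *\<^sub>R (y - x) = (1 - t) *\<^sub>R x + t *\<^sub>R y"
      by (simp add: algebra_simps)
    have "g x + \<phi> x \<le> g ((1 - t) *\<^sub>R x + t *\<^sub>R y) + ?f t"
      using min D x y t by (simp add: seg convex_def)
    also have "\<dots> \<le> (1 - t) * g x + t * g y + ?f t"
      using convex_onD[OF g, of t x y] x y t by simp
    finally have "t * (g x - g y) \<le> ?f t - ?f 0" by (simp add: algebra_simps)
    then show ?case using t by (simp add: field_simps)
  qed
  moreover have "((\<lambda>t. (?f t - ?f 0) / (t - 0)) \<longlongrightarrow> L) (at_right 0)"
    using deriv unfolding has_field_derivative_iff .
  ultimately show ?thesis
    using tendsto_le[OF trivial_limit_at_right_real _ tendsto_const] by blast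
qed

lemma has_real_derivative_norm_line:
  fixes x d :: "'a::real_inner"
  assumes "x \<noteq> 0"
  shows "((\<lambda>t. norm (x + t *\<^sub>R d)) has_real_derivative (x \<bullet> d) / norm x) (at 0)"
proof -
  have line: "((\<lambda>t. x + t *\<^sub>R d) has_derivative (\<lambda>h. h *\<^sub>R d)) (at 0)"
    by (auto intro!: derivative_eq_intros)
  have "(norm has_derivative (\<lambda>v. v \<bullet> sgn x)) (at (x + 0 *\<^sub>R d))"
    using has_derivative_norm[OF assms] by simp
  from has_derivative_compose[OF line this] show ?thesis
    by (rule has_derivative_imp_has_field_derivative)
      (simp add: sgn_div_norm inner_commute field_simps)
qed

lemma has_real_derivative_norm_powr_line:
  fixes x d :: "'a::real_inner"
  assumes "x \<noteq> 0"
  shows "((\<lambda>t. norm (x + t *\<^sub>R d) powr r) has_real_derivative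
           r * norm x powr (r - 2) * (x \<bullet> d)) (at 0)"
  using DERIV_fun_powr[OF has_real_derivative_norm_line[OF assms], where r = r] assms
  by (simp add: powr_diff field_simps power2_eq_square)

lemma has_real_derivative_power2_norm_line:
  fixes x d :: "'a::real_inner"
  shows "((\<lambda>t. (norm (x + t *\<^sub>R d))\<^sup>2) has_real_derivative 2 * (x \<bullet> d)) (at 0)"
  unfolding power2_norm_eq_inner has_field_derivative_def
  by (auto intro!: derivative_eq_intros simp: inner_commute algebra_simps)

lemma convex_on_min_norm_powr_variational_ineq:
  fixes g :: "'a::real_inner \<Rightarrow> real"
  assumes "convex D" "convex_on D g" "x \<in> D" "y \<in> D" "x \<noteq> 0"
    and "\<forall>z\<in>D. g x + c * norm x powr r \<le> g z + c * norm z powr r"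
  shows "g x - g y \<le> c * r * norm x powr (r - 2) * (x \<bullet> (y - x))"
proof (rule convex_on_minimizer_variational_ineq[where g = g and x = x and y = y and \<phi> = "\<lambda>z. c * norm z powr r"])
  show "((\<lambda>t. c * norm (x + t *\<^sub>R (y - x)) powr r) has_real_derivative
          c * r * norm x powr (r - 2) * (x \<bullet> (y - x))) (at_right 0)"
    using DERIV_cmult[OF has_real_derivative_norm_powr_line[OF \<open>x \<noteq> 0\<close>], of c]
    by (simp add: has_field_derivative_at_within mult.assoc)
qed (use assms in auto)

lemma convex_on_min_power2_norm_variational_ineq:
  fixes g :: "'a::real_inner \<Rightarrow> real"
  assumes "convex D" "convex_on D g" "x \<in> D" "y \<in> D"
    and "\<forall>z\<in>D. g x + c * (norm x)\<^sup>2 \<le> g z + c * (norm z)\<^sup>2"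
  shows "g x - g y \<le> 2 * c * (x \<bullet> (y - x))"
proof (rule convex_on_minimizer_variational_ineq[where g = g and x = x and y = y and \<phi> = "\<lambda>z. c * (norm z)\<^sup>2"])
  show "((\<lambda>t. c * (norm (x + t *\<^sub>R (y - x)))\<^sup>2) has_real_derivative
          2 * c * (x \<bullet> (y - x))) (at_right 0)"
    using DERIV_cmult[OF has_real_derivative_power2_norm_line, of c x "y - x"]
    by (simp add: has_field_derivative_at_within mult.assoc mult.left_commute)
qed (use assms in auto)

lemma norm_gap_mult_nonneg_if_inner_gap_nonneg:
  fixes x y :: "'a::real_inner"
  assumes a: "0 \<le> a" and b: "0 \<le> b"
    and gap: "0 \<le> a * (x \<bullet> y - (norm x)\<^sup>2) + b * (x \<bullet> y - (norm y)\<^sup>2)"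
  shows "0 \<le> (a * norm x - b * norm y) * (norm y - norm x)"
proof -
  have cs: "x \<bullet> y \<le> norm x * norm y"
    by (rule norm_cauchy_schwarz)
  have "a * (x \<bullet> y - (norm x)\<^sup>2) + b * (x \<bullet> y - (norm y)\<^sup>2)
      \<le> a * (norm x * norm y - (norm x)\<^sup>2) + b * (norm x * norm y - (norm y)\<^sup>2)"
    using a b cs by (intro add_mono mult_left_mono) auto
  also have "\<dots> = (a * norm x - b * norm y) * (norm y - norm x)"
    by (simp add: algebra_simps power2_eq_square)
  finally show ?thesis using gap by linarith
qed

lemma between_if_mult_nonneg:
  fixes m b s :: real
  assumes "0 \<le> (m - b) * (b - s)"
  shows "min s m \<le> b \<and> b \<le> max s m"
  using assms by (auto simp: zero_le_mult_iff)

lemma weighted_geometric_mean_between: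
  fixes a s \<theta> :: real
  assumes "0 < a" "0 < s" "0 \<le> \<theta>" "\<theta> \<le> 1"
  shows "min a s \<le> a powr \<theta> * s powr (1 - \<theta>) \<and> a powr \<theta> * s powr (1 - \<theta>) \<le> max a s"
proof
  have "min a s = min a s powr \<theta> * min a s powr (1 - \<theta>)"
    using assms by (simp add: powr_add[symmetric])
  also have "\<dots> \<le> a powr \<theta> * s powr (1 - \<theta>)"
    using assms by (intro mult_mono powr_mono2) auto
  finally show "min a s \<le> a powr \<theta> * s powr (1 - \<theta>)" .
  have "a powr \<theta> * s powr (1 - \<theta>) \<le> max a s powr \<theta> * max a s powr (1 - \<theta>)"
    using assms by (intro mult_mono powr_mono2) auto
  also have "\<dots> = max a s"
    using assms by (simp add: powr_add[symmetric])
  finally show "a powr \<theta> * s powr (1 - \<theta>) \<le> max a s" .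
qed

lemma between_if_weighted_gap_nonneg:
  fixes a s b q :: real
  assumes a: "0 < a" and s: "0 < s" and q: "0 \<le> q" "q \<le> 1"
    and gap: "0 \<le> (s powr (q - 1) * s - a powr (q - 1) * b) * (b - s)"
  shows "min s a \<le> b \<and> b \<le> max s a"
proof -
  define m where "m = a powr (1 - q) * s powr q"
  have "s powr (q - 1) * s = s powr q"
    using s powr_add[of s "q - 1" 1] by simp
  moreover have "a powr (1 - q) * a powr (q - 1) = 1"
    using a by (simp add: powr_add[symmetric])
  ultimately have "a powr (1 - q) * (s powr (q - 1) * s - a powr (q - 1) * b) = m - b"
    by (simp add: m_def algebra_simps)
  then have "0 \<le> (m - b) * (b - s)"
    using gap a by (metis mult.assoc powr_ge_zero zero_le_mult_iff)
  then have "min s m \<le> b \<and> b \<le> max s m"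
    by (rule between_if_mult_nonneg)
  moreover have "min a s \<le> m \<and> m \<le> max a s"
    using weighted_geometric_mean_between[OF a s, of "1 - q"] q by (simp add: m_def)
  ultimately show ?thesis by linarith
qed

lemma powr_gap_mult_nonneg_if_between:
  fixes a s b r :: real
  assumes a: "0 < a" and s: "0 < s" and r: "0 \<le> r"
    and b: "min s a \<le> b" "b \<le> max s a"
  shows "0 \<le> (a powr r - s powr r) * (b\<^sup>2 - s\<^sup>2)
       \<and> 0 \<le> (a powr r - s powr r) * (a powr r - b powr r)"
proof (cases "s \<le> a")
  case True
  then have "s \<le> b" "b \<le> a" using b by auto
  then show ?thesis
    using s r True by (simp add: powr_mono2 power_mono)
next
  case False
  then have "a \<le> b" "b \<le> s" using b by auto
  then have "a powr r \<le> s powr r" "b\<^sup>2 \<le> s\<^sup>2" "a powr r \<le> b powr r"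
    using a r by (simp_all add: powr_mono2 power_mono)
  then show ?thesis
    by (simp add: mult_nonpos_nonpos)
qed

theorem lemma4p4:
  fixes g :: "'a::euclidean_space \<Rightarrow> real"
    and D :: "'a set"
    and p \<mu> :: real
    and lstar lk lk1 :: 'a
  assumes p: "p \<ge> 1" and mu: "\<mu> > 0"
    and D_convex: "convex D" and g_convex: "convex_on D g"
    and lstar_in: "lstar \<in> D"
    and lstar_opt: "\<forall>l\<in>D. g lstar + \<mu> / (1 + 1/p) * norm lstar powr (1 + 1/p)
                          \<le> g l + \<mu> / (1 + 1/p) * norm l powr (1 + 1/p)"
    and lstar_nz: "lstar \<noteq> 0"
    and lk_pos: "norm lk > 0"
    and lk1_in: "lk1 \<in> D"
    and lk1_opt: "\<forall>l\<in>D. g lk1 + \<mu> / 2 * (norm lk powr (1/p - 1)) * (norm lk1)\<^sup>2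
                        \<le> g l + \<mu> / 2 * (norm lk powr (1/p - 1)) * (norm l)\<^sup>2"
  shows "(norm lk powr (1 - 1/p) - norm lstar powr (1 - 1/p))
           * ((norm lk1)\<^sup>2 - (norm lstar)\<^sup>2) \<ge> 0
         \<and> (norm lk powr (1 - 1/p) - norm lstar powr (1 - 1/p))
           * (norm lk powr (1 - 1/p) - norm lk1 powr (1 - 1/p)) \<ge> 0"
proof -
  define S where "S = norm lstar powr (1/p - 1)"
  define A where "A = norm lk powr (1/p - 1)"
  have q: "0 \<le> 1/p" "1/p \<le> 1" using p by auto
  then have "1 + 1/p \<noteq> 0" by linarith
  have "g lstar - g lk1 \<le> \<mu> * S * (lstar \<bullet> (lk1 - lstar))"
    using convex_on_min_norm_powr_variational_ineq[OF D_convex g_convex lstar_in lk1_in lstar_nz lstar_opt]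
      \<open>1 + 1/p \<noteq> 0\<close>
    by (simp add: S_def)
  moreover have "g lk1 - g lstar \<le> \<mu> * A * (lk1 \<bullet> (lstar - lk1))"
    using convex_on_min_power2_norm_variational_ineq[OF D_convex g_convex lk1_in lstar_in lk1_opt]
    by (simp add: A_def)
  ultimately have
    "0 \<le> \<mu> * (S * (lstar \<bullet> lk1 - (norm lstar)\<^sup>2) + A * (lstar \<bullet> lk1 - (norm lk1)\<^sup>2))"
    by (simp add: algebra_simps inner_diff_right power2_norm_eq_inner inner_commute)
  then have "0 \<le> (S * norm lstar - A * norm lk1) * (norm lk1 - norm lstar)"
    using mu by (intro norm_gap_mult_nonneg_if_inner_gap_nonneg)
      (auto simp: S_def A_def zero_le_mult_iff)
  then have
    "min (norm lstar) (norm lk) \<le> norm lk1 \<and> norm lk1 \<le> max (norm lstar) (norm lk)"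
    using lstar_nz lk_pos q by (intro between_if_weighted_gap_nonneg) (auto simp: S_def A_def)
  then show ?thesis
    using lstar_nz lk_pos q by (intro powr_gap_mult_nonneg_if_between) auto
qed

end
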